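(* Let $\mathbf x_1,\dots,\mathbf x_l\in\mathbb{R}^n$, $y_1,\dots,y_l\in\mathbb{R}$, let $\mathbf X\in\mathbb{R}^{l\times n}$ have $i$-th row $\mathbf x_i^T$ and $\mathbf y=(y_1,\dots,y_l)^T$. For $C>0$ let $\mathbf w^*(C)$ be the optimal solution of the least absolute deviations problem $$\min_{\mathbf w}\tfrac12\|\mathbf w\|^2+C\sum_{i=1}^l|y_i-\mathbf w^T\mathbf x_i|,$$ and $\theta^*(C)$ an optimal solution of its dual $\min_{\theta\in[-1,1]^l}\frac C2\|\mathbf X^T\theta\|^2-\langle\mathbf y,\theta\rangle$. Let $0<C_1<\dots<C_{\mathcal K}$ and suppose $\mathbf w^*(C_k)$ is known for some integer $1\le k<\mathcal K$. Then $[\theta^*(C_{k+1})]_i=-1$ (i.e., $i\in\mathcal R$) if $$\tfrac{C_{k+1}+C_k}{2C_k}\langle\mathbf w^*(C_k),\mathbf x_i\rangle-\tfrac{C_{k+1}-C_k}{2C_k}\|\mathbf w^*(C_k)\|\,\|\mathbf x_i\|>y_i,$$ and $[\theta^*(C_{k+1})]_i=1$ (i.e., $i\in\mathcal L$) if $$\tfrac{C_{k+1}+C_k}{2C_k}\langle\mathbf w^*(C_k),\mathbf x_i\rangle+\tfrac{C_{k+1}-C_k}{2C_k}\|\mathbf w^*(C_k)\|\,\|\mathbf x_i\|<y_i.$$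
   Context: Primal and dual solutions satisfy $\mathbf w^*(C)=C\mathbf X^T\theta^*(C)$. At parameter $C=C_{k+1}$: $\mathcal R=\{i:\langle\mathbf w^*(C),\mathbf x_i\rangle>y_i\}$ and $\mathcal L=\{i:\langle\mathbf w^*(C),\mathbf x_i\rangle<y_i\}$. *)

theory Defs
  imports "HOL-Analysis.Analysis"
begin

text \<open>Data: samples x i in R^n (type real^'n) and responses y i, indexed by a finite
type 'l (so l = CARD('l)).  X^T theta is the vector sum over i of theta i *R x i.\<close>

definition XT :: "('l::finite \<Rightarrow> real^'n) \<Rightarrow> ('l \<Rightarrow> real) \<Rightarrow> real^'n" where
  "XT x \<theta> = (\<Sum>i\<in>UNIV. \<theta> i *\<^sub>R x i)"

definition lad_primal ::
  "('l::finite \<Rightarrow> real^'n) \<Rightarrow> ('l \<Rightarrow> real) \<Rightarrow> real \<Rightarrow> real^'n \<Rightarrow> real" where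
  "lad_primal x y C w = (1/2) * (norm w)^2 + C * (\<Sum>i\<in>UNIV. \<bar>y i - w \<bullet> x i\<bar>)"

definition lad_dual ::
  "('l::finite \<Rightarrow> real^'n) \<Rightarrow> ('l \<Rightarrow> real) \<Rightarrow> real \<Rightarrow> ('l \<Rightarrow> real) \<Rightarrow> real" where
  "lad_dual x y C \<theta> = (C/2) * (norm (XT x \<theta>))^2 - (\<Sum>i\<in>UNIV. y i * \<theta> i)"

definition dual_feasible :: "('l::finite \<Rightarrow> real) \<Rightarrow> bool" where
  "dual_feasible \<theta> \<longleftrightarrow> (\<forall>i. -1 \<le> \<theta> i \<and> \<theta> i \<le> 1)"

definition primal_opt ::
  "('l::finite \<Rightarrow> real^'n) \<Rightarrow> ('l \<Rightarrow> real) \<Rightarrow> real \<Rightarrow> real^'n \<Rightarrow> bool" where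
  "primal_opt x y C w \<longleftrightarrow> (\<forall>v. lad_primal x y C w \<le> lad_primal x y C v)"

definition dual_opt ::
  "('l::finite \<Rightarrow> real^'n) \<Rightarrow> ('l \<Rightarrow> real) \<Rightarrow> real \<Rightarrow> ('l \<Rightarrow> real) \<Rightarrow> bool" where
  "dual_opt x y C \<theta> \<longleftrightarrow> dual_feasible \<theta> \<and>
     (\<forall>\<eta>. dual_feasible \<eta> \<longrightarrow> lad_dual x y C \<theta> \<le> lad_dual x y C \<eta>)"

end

theory Submission
  imports Defs
begin

text \<open>Let \<open>C = C\<^sub>k\<close>, \<open>C' = C\<^sub>k\<^sub>+\<^sub>1\<close> and \<open>u = C' X\<^sup>T \<theta>\<close>. First-order optimality of \<open>\<theta>\<close> for the dual
  at \<open>C'\<close> forces \<open>\<theta>\<^sub>i = -1\<close> whenever \<open>\<langle>u, x\<^sub>i\<rangle> > y\<^sub>i\<close> and \<open>\<theta>\<^sub>i = 1\<close> whenever \<open>\<langle>u, x\<^sub>i\<rangle> < y\<^sub>i\<close>.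
  Combining these complementarity relations with the variational inequality of the primal
  problem at \<open>C\<close> gives \<open>C \<langle>u, u - w\<rangle> \<le> C' \<langle>w, u - w\<rangle>\<close>, i.e. \<open>u\<close> lies in the ball with
  diameter \<open>[w, (C'/C) w]\<close>. The centre of that ball is \<open>(C' + C)/(2C) w\<close> and its radius is
  \<open>(C' - C)/(2C) \<parallel>w\<parallel>\<close>, so Cauchy-Schwarz locates \<open>\<langle>u, x\<^sub>i\<rangle>\<close> and the test decides its sign
  relative to \<open>y\<^sub>i\<close>.\<close>

lemma nonneg_if_quadratic_nonneg_near_0:
  fixes g a :: real
  assumes "\<And>t. 0 < t \<Longrightarrow> t \<le> 1 \<Longrightarrow> 0 \<le> t * g + t\<^sup>2 * a"
  shows "0 \<le> g"
proof (rule ccontr)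
  assume "\<not> 0 \<le> g"
  define t where "t = min 1 (- g / (2 * \<bar>a\<bar> + 1))"
  have denom: "0 < 2 * \<bar>a\<bar> + 1" by simp
  have t: "0 < t" "t \<le> 1"
    using \<open>\<not> 0 \<le> g\<close> denom by (auto simp: t_def not_le divide_neg_pos)
  have "t \<le> - g / (2 * \<bar>a\<bar> + 1)" by (simp add: t_def)
  then have "t * (2 * \<bar>a\<bar> + 1) \<le> - g"
    using denom by (metis pos_le_divide_eq)
  then have "t + 2 * (t * \<bar>a\<bar>) \<le> - g"
    by (simp add: algebra_simps)
  moreover have "t * a \<le> t * \<bar>a\<bar>" "0 \<le> t * \<bar>a\<bar>"
    using t(1) by (simp_all add: mult_left_mono)
  ultimately have "g + t * a < 0"
    using t(1) by linarith
  have "t * g + t\<^sup>2 * a = t * (g + t * a)"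
    by (simp add: power2_eq_square algebra_simps)
  also have "\<dots> < 0"
    using t(1) \<open>g + t * a < 0\<close> by (rule mult_pos_neg)
  finally show False
    using assms[OF t(1,2)] by simp
qed

lemma norm_add_scaleR_power2:
  fixes a b :: "'a::real_inner"
  shows "(norm (a + t *\<^sub>R b))\<^sup>2 = (norm a)\<^sup>2 + 2 * t * inner a b + t\<^sup>2 * (norm b)\<^sup>2"
  unfolding power2_norm_eq_inner
  by (simp add: inner_add inner_commute algebra_simps power2_eq_square)

text \<open>Thales: \<open>u\<close> sees the segment \<open>[a, b]\<close> under an obtuse angle.\<close>
lemma norm_minus_midpoint_le_if_inner_nonpos:
  fixes u a b :: "'a::real_inner"
  assumes "inner (u - a) (u - b) \<le> 0"
  shows "norm (u - (1/2) *\<^sub>R (a + b)) \<le> norm (a - b) / 2"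
proof -
  have "(norm (u - (1/2) *\<^sub>R (a + b)))\<^sup>2 = inner (u - a) (u - b) + (norm (a - b))\<^sup>2 / 4"
    unfolding power2_norm_eq_inner by (simp add: inner_add inner_diff inner_commute field_simps)
  also have "\<dots> \<le> (norm (a - b) / 2)\<^sup>2"
    using assms by (simp add: power_divide)
  finally show ?thesis
    by (rule power2_le_imp_le) simp
qed

lemma inner_near_scaled_if_inner_le:
  fixes u w z :: "'a::real_inner"
  assumes "0 < C" "C \<le> C'" "C * inner u (u - w) \<le> C' * inner w (u - w)"
  shows "\<bar>inner u z - (C' + C) / (2 * C) * inner w z\<bar> \<le> (C' - C) / (2 * C) * norm w * norm z"
proof -
  define b where "b = (C' / C) *\<^sub>R w"
  have "inner (u - w) (u - b) = (C * inner u (u - w) - C' * inner w (u - w)) / C"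
    using assms(1) by (simp add: b_def inner_diff inner_commute field_simps)
  also have "\<dots> \<le> 0"
    using assms(1,3) by (simp add: divide_nonpos_pos)
  finally have "norm (u - (1/2) *\<^sub>R (w + b)) \<le> norm (w - b) / 2"
    by (rule norm_minus_midpoint_le_if_inner_nonpos)
  moreover have "(1/2) *\<^sub>R (w + b) = ((C' + C) / (2 * C)) *\<^sub>R w"
    using assms(1) by (simp add: b_def scaleR_add_left[symmetric] field_simps)
  moreover have "norm (w - b) / 2 = (C' - C) / (2 * C) * norm w"
  proof -
    have "w - b = (1 - C' / C) *\<^sub>R w" by (simp add: b_def algebra_simps)
    moreover have "\<bar>1 - C' / C\<bar> = (C' - C) / C" using assms(1,2) by (simp add: field_simps)
    ultimately show ?thesis by simp
  qed
  ultimately have "norm (u - ((C' + C) / (2 * C)) *\<^sub>R w) \<le> (C' - C) / (2 * C) * norm w"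
    by simp
  then have "norm (u - ((C' + C) / (2 * C)) *\<^sub>R w) * norm z \<le> (C' - C) / (2 * C) * norm w * norm z"
    by (rule mult_right_mono) simp
  moreover have "inner u z - (C' + C) / (2 * C) * inner w z = inner (u - ((C' + C) / (2 * C)) *\<^sub>R w) z"
    by (simp add: inner_diff_left)
  ultimately show ?thesis
    using Cauchy_Schwarz_ineq2 order_trans by metis
qed

definition lad_loss :: "('l::finite \<Rightarrow> real^'n) \<Rightarrow> ('l \<Rightarrow> real) \<Rightarrow> real^'n \<Rightarrow> real" where
  "lad_loss x y w = (\<Sum>i\<in>UNIV. \<bar>y i - w \<bullet> x i\<bar>)"

lemma lad_primal_eq: "lad_primal x y C w = (1/2) * (norm w)\<^sup>2 + C * lad_loss x y w"
  by (simp add: lad_primal_def lad_loss_def)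

lemma lad_loss_convex:
  assumes "0 \<le> t" "t \<le> 1"
  shows "lad_loss x y (w + t *\<^sub>R (v - w)) \<le> (1 - t) * lad_loss x y w + t * lad_loss x y v"
proof -
  have "\<bar>y i - (w + t *\<^sub>R (v - w)) \<bullet> x i\<bar> \<le> (1 - t) * \<bar>y i - w \<bullet> x i\<bar> + t * \<bar>y i - v \<bullet> x i\<bar>" for i
  proof -
    have "y i - (w + t *\<^sub>R (v - w)) \<bullet> x i = (1 - t) * (y i - w \<bullet> x i) + t * (y i - v \<bullet> x i)"
      by (simp add: algebra_simps inner_diff_left)
    then show ?thesis
      using assms abs_triangle_ineq[of "(1 - t) * (y i - w \<bullet> x i)" "t * (y i - v \<bullet> x i)"]
      by (simp add: abs_mult)
  qed
  then have "lad_loss x y (w + t *\<^sub>R (v - w))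
      \<le> (\<Sum>i\<in>UNIV. (1 - t) * \<bar>y i - w \<bullet> x i\<bar> + t * \<bar>y i - v \<bullet> x i\<bar>)"
    unfolding lad_loss_def by (rule sum_mono)
  then show ?thesis
    by (simp add: lad_loss_def sum.distrib sum_distrib_left)
qed

lemma primal_opt_variational_inequality:
  assumes "primal_opt x y C w" "0 \<le> C"
  shows "C * (lad_loss x y w - lad_loss x y v) \<le> inner w (v - w)"
proof -
  have "0 \<le> inner w (v - w) - C * (lad_loss x y w - lad_loss x y v)"
  proof (rule nonneg_if_quadratic_nonneg_near_0[where a = "(norm (v - w))\<^sup>2 / 2"])
    fix t :: real assume "0 < t" "t \<le> 1"
    then have "lad_loss x y (w + t *\<^sub>R (v - w)) \<le> (1 - t) * lad_loss x y w + t * lad_loss x y v"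
      by (simp add: lad_loss_convex)
    then have loss: "C * lad_loss x y (w + t *\<^sub>R (v - w))
        \<le> C * ((1 - t) * lad_loss x y w + t * lad_loss x y v)"
      using assms(2) by (rule mult_left_mono)
    have "lad_primal x y C w \<le> lad_primal x y C (w + t *\<^sub>R (v - w))"
      using assms(1) by (simp add: primal_opt_def)
    also have "\<dots> \<le> (1/2) * (norm (w + t *\<^sub>R (v - w)))\<^sup>2
        + C * ((1 - t) * lad_loss x y w + t * lad_loss x y v)"
      unfolding lad_primal_eq using loss by simp
    finally show "0 \<le> t * (inner w (v - w) - C * (lad_loss x y w - lad_loss x y v))
        + t\<^sup>2 * ((norm (v - w))\<^sup>2 / 2)"
      unfolding lad_primal_eq norm_add_scaleR_power2 by (simp add: algebra_simps power2_eq_square)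
  qed
  then show ?thesis by simp
qed

lemma XT_fun_upd: "XT x (\<theta>(i := v)) = XT x \<theta> + (v - \<theta> i) *\<^sub>R x i"
proof -
  have "\<theta>(i := v) = (\<lambda>j. \<theta> j + (if j = i then v - \<theta> i else 0))" by auto
  then show ?thesis
    by (simp add: XT_def scaleR_add_left sum.distrib if_distrib[of "\<lambda>c. c *\<^sub>R x _"] cong: if_cong)
qed

lemma dual_opt_coordinate_condition:
  assumes "dual_opt x y C \<theta>" "-1 \<le> c" "c \<le> 1"
  shows "0 \<le> (C *\<^sub>R XT x \<theta> \<bullet> x i - y i) * (c - \<theta> i)"
proof (rule nonneg_if_quadratic_nonneg_near_0[where a = "C / 2 * (c - \<theta> i)\<^sup>2 * (norm (x i))\<^sup>2"])
  fix t :: real assume t: "0 < t" "t \<le> 1"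
  define \<eta> where "\<eta> = \<theta>(i := \<theta> i + t * (c - \<theta> i))"
  have "-1 \<le> \<theta> i" "\<theta> i \<le> 1"
    using assms(1) by (auto simp: dual_opt_def dual_feasible_def)
  moreover have "\<theta> i + t * (c - \<theta> i) = (1 - t) * \<theta> i + t * c"
    by (simp add: algebra_simps)
  moreover have "t - 1 \<le> (1 - t) * \<theta> i" "(1 - t) * \<theta> i \<le> 1 - t" "- t \<le> t * c" "t * c \<le> t"
    using mult_left_mono[of "-1" "\<theta> i" "1 - t"] mult_left_mono[of "\<theta> i" 1 "1 - t"]
      mult_left_mono[of "-1" c t] mult_left_mono[of c 1 t] calculation(1,2) assms(2,3) t
    by simp_all
  ultimately have "-1 \<le> \<theta> i + t * (c - \<theta> i) \<and> \<theta> i + t * (c - \<theta> i) \<le> 1"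
    by linarith
  then have "dual_feasible \<eta>"
    using assms(1) by (auto simp: \<eta>_def dual_opt_def dual_feasible_def)
  then have "lad_dual x y C \<theta> \<le> lad_dual x y C \<eta>"
    using assms(1) by (simp add: dual_opt_def)
  also have "lad_dual x y C \<eta> = lad_dual x y C \<theta>
      + t * ((C *\<^sub>R XT x \<theta> \<bullet> x i - y i) * (c - \<theta> i))
      + t\<^sup>2 * (C / 2 * (c - \<theta> i)\<^sup>2 * (norm (x i))\<^sup>2)"
  proof -
    define d where "d = t * (c - \<theta> i)"
    have "(\<Sum>j\<in>UNIV. y j * \<eta> j) = (\<Sum>j\<in>UNIV. y j * \<theta> j + (if j = i then y i * d else 0))"
      by (rule sum.cong) (auto simp: \<eta>_def d_def algebra_simps)
    then have sum: "(\<Sum>j\<in>UNIV. y j * \<eta> j) = (\<Sum>j\<in>UNIV. y j * \<theta> j) + y i * d"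
      by (simp add: sum.distrib)
    have norm: "(norm (XT x \<eta>))\<^sup>2
        = (norm (XT x \<theta>))\<^sup>2 + 2 * d * (XT x \<theta> \<bullet> x i) + d\<^sup>2 * (norm (x i))\<^sup>2"
      unfolding \<eta>_def d_def XT_fun_upd by (simp add: norm_add_scaleR_power2)
    show ?thesis
      unfolding lad_dual_def sum norm by (simp add: d_def power2_eq_square algebra_simps)
  qed
  finally show "0 \<le> t * ((C *\<^sub>R XT x \<theta> \<bullet> x i - y i) * (c - \<theta> i))
      + t\<^sup>2 * (C / 2 * (c - \<theta> i)\<^sup>2 * (norm (x i))\<^sup>2)"
    by simp
qed

lemma dual_opt_eq_neg_one:
  assumes "dual_opt x y C \<theta>" "y i < C *\<^sub>R XT x \<theta> \<bullet> x i"
  shows "\<theta> i = -1"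
proof -
  have "0 \<le> (C *\<^sub>R XT x \<theta> \<bullet> x i - y i) * (-1 - \<theta> i)"
    using dual_opt_coordinate_condition[OF assms(1), of "-1"] by simp
  moreover have "-1 \<le> \<theta> i"
    using assms(1) by (simp add: dual_opt_def dual_feasible_def)
  ultimately show ?thesis
    using assms(2) by (simp add: zero_le_mult_iff)
qed

lemma dual_opt_eq_one:
  assumes "dual_opt x y C \<theta>" "C *\<^sub>R XT x \<theta> \<bullet> x i < y i"
  shows "\<theta> i = 1"
proof -
  have "0 \<le> (C *\<^sub>R XT x \<theta> \<bullet> x i - y i) * (1 - \<theta> i)"
    using dual_opt_coordinate_condition[OF assms(1), of 1] by simp
  moreover have "\<theta> i \<le> 1"
    using assms(1) by (simp add: dual_opt_def dual_feasible_def)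
  ultimately show ?thesis
    using assms(2) by (simp add: zero_le_mult_iff)
qed

lemma dual_opt_complementary_slackness:
  assumes "dual_opt x y C \<theta>"
  shows "\<theta> i * (C *\<^sub>R XT x \<theta> \<bullet> x i - y i) = - \<bar>y i - C *\<^sub>R XT x \<theta> \<bullet> x i\<bar>"
  using dual_opt_eq_neg_one[OF assms, of i] dual_opt_eq_one[OF assms, of i]
  by (cases "C *\<^sub>R XT x \<theta> \<bullet> x i" "y i" rule: linorder_cases) auto

lemma dual_opt_inner_le:
  assumes "dual_opt x y C \<theta>" "0 \<le> C"
  defines "u \<equiv> C *\<^sub>R XT x \<theta>"
  shows "inner u (u - w) \<le> C * (lad_loss x y w - lad_loss x y u)"
proof -
  have "\<theta> i * ((u - w) \<bullet> x i) \<le> \<bar>y i - w \<bullet> x i\<bar> - \<bar>y i - u \<bullet> x i\<bar>" for i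
  proof -
    have "\<bar>\<theta> i\<bar> \<le> 1"
      using assms(1) by (simp add: dual_opt_def dual_feasible_def abs_le_iff)
    then have "\<theta> i * (y i - w \<bullet> x i) \<le> \<bar>y i - w \<bullet> x i\<bar>"
      using abs_ge_self[of "\<theta> i * (y i - w \<bullet> x i)"]
        mult_right_mono[of "\<bar>\<theta> i\<bar>" 1 "\<bar>y i - w \<bullet> x i\<bar>"]
      by (simp add: abs_mult)
    moreover have "\<theta> i * ((u - w) \<bullet> x i) = \<theta> i * (u \<bullet> x i - y i) + \<theta> i * (y i - w \<bullet> x i)"
      by (simp add: inner_diff_left algebra_simps)
    ultimately show ?thesis
      using dual_opt_complementary_slackness[OF assms(1), of i] by (simp add: u_def)
  qed
  then have "(\<Sum>i\<in>UNIV. \<theta> i * ((u - w) \<bullet> x i)) \<le> lad_loss x y w - lad_loss x y u"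
    unfolding lad_loss_def sum_subtractf[symmetric] by (rule sum_mono)
  moreover have "inner u (u - w) = C * (\<Sum>i\<in>UNIV. \<theta> i * ((u - w) \<bullet> x i))"
  proof -
    have "inner u (u - w) = inner (u - w) (C *\<^sub>R XT x \<theta>)"
      by (simp add: u_def inner_commute)
    then show ?thesis
      by (simp add: XT_def inner_sum_right sum_distrib_left)
  qed
  ultimately show ?thesis
    using assms(2) by (simp add: mult_left_mono)
qed

lemma primal_dual_opt_inner_le:
  assumes "primal_opt x y C w" "dual_opt x y C' \<theta>" "0 \<le> C" "0 \<le> C'"
  defines "u \<equiv> C' *\<^sub>R XT x \<theta>"
  shows "C * inner u (u - w) \<le> C' * inner w (u - w)"
proof -
  have "C * inner u (u - w) \<le> C * (C' * (lad_loss x y w - lad_loss x y u))"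
    using mult_left_mono[OF dual_opt_inner_le[OF assms(2,4), of w] assms(3)] by (simp add: u_def)
  also have "\<dots> = C' * (C * (lad_loss x y w - lad_loss x y u))"
    by (rule mult.left_commute)
  also have "\<dots> \<le> C' * inner w (u - w)"
    using primal_opt_variational_inequality[OF assms(1,3)] assms(4) by (simp add: mult_left_mono)
  finally show ?thesis .
qed

theorem corollary6:
  fixes x :: "'l::finite \<Rightarrow> real^'n" and y :: "'l \<Rightarrow> real"
    and Cs :: "nat \<Rightarrow> real" and K k :: nat
    and w :: "real^'n" and \<theta> :: "'l \<Rightarrow> real"
  assumes "0 < Cs 1"
    and "\<forall>j. 1 \<le> j \<and> j < K \<longrightarrow> Cs j < Cs (Suc j)"
    and "1 \<le> k" and "k < K"
    and "primal_opt x y (Cs k) w"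
    and "dual_opt x y (Cs (Suc k)) \<theta>"
  shows "\<forall>i.
      ((Cs (Suc k) + Cs k) / (2 * Cs k) * (w \<bullet> x i)
         - (Cs (Suc k) - Cs k) / (2 * Cs k) * norm w * norm (x i) > y i
         \<longrightarrow> \<theta> i = -1)
    \<and> ((Cs (Suc k) + Cs k) / (2 * Cs k) * (w \<bullet> x i)
         + (Cs (Suc k) - Cs k) / (2 * Cs k) * norm w * norm (x i) < y i
         \<longrightarrow> \<theta> i = 1)"
proof -
  have "Cs 1 \<le> Cs k"
    using \<open>1 \<le> k\<close> \<open>k < K\<close>
  proof (induction k rule: dec_induct)
    case (step j)
    then show ?case using assms(2) by force
  qed simp
  then have C_pos: "0 < Cs k" using assms(1) by simp
  have C_less: "Cs k < Cs (Suc k)" using assms(2-4) by simp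
  define u where "u = Cs (Suc k) *\<^sub>R XT x \<theta>"
  have "Cs k * inner u (u - w) \<le> Cs (Suc k) * inner w (u - w)"
    unfolding u_def using assms(5,6) C_pos C_less by (intro primal_dual_opt_inner_le) auto
  then have C_bound: "\<bar>u \<bullet> x i - (Cs (Suc k) + Cs k) / (2 * Cs k) * (w \<bullet> x i)\<bar>
      \<le> (Cs (Suc k) - Cs k) / (2 * Cs k) * norm w * norm (x i)" for i
    by (rule inner_near_scaled_if_inner_le[OF C_pos less_imp_le[OF C_less]])
  show ?thesis
  proof (intro allI conjI impI)
    fix i
    assume "(Cs (Suc k) + Cs k) / (2 * Cs k) * (w \<bullet> x i)
      - (Cs (Suc k) - Cs k) / (2 * Cs k) * norm w * norm (x i) > y i"
    then have "y i < u \<bullet> x i"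
      using C_bound[of i] unfolding abs_le_iff by linarith
    then show "\<theta> i = -1"
      using dual_opt_eq_neg_one[OF assms(6)] by (simp add: u_def)
  next
    fix i
    assume "(Cs (Suc k) + Cs k) / (2 * Cs k) * (w \<bullet> x i)
      + (Cs (Suc k) - Cs k) / (2 * Cs k) * norm w * norm (x i) < y i"
    then have "u \<bullet> x i < y i"
      using C_bound[of i] unfolding abs_le_iff by linarith
    then show "\<theta> i = 1"
      using dual_opt_eq_one[OF assms(6)] by (simp add: u_def)
  qed
qed

end
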